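(* Let $X$, $Y$ be disjoint sets of cardinality at least two, and let $M\le\mathrm{Sym}(X)$ and $N\le\mathrm{Sym}(Y)$ be nontrivial permutation groups. Then $M\boxtimes N$ is discrete (in the permutation topology of $\mathrm{Sym}(V_Y)$) if and only if $M$ and $N$ are semi-regular.
   Context: A permutation group is semi-regular if every point stabiliser is trivial. A group $G\le\mathrm{Sym}(V)$ is discrete in the permutation topology (pointwise convergence) iff the pointwise stabiliser in $G$ of some finite subset of $V$ is trivial. Let $T$ be the $(|X|,|Y|)$-biregular tree with natural bipartition $VT=V_X\sqcup V_Y$ (vertices in $V_X$ have valency $|X|$, in $V_Y$ valency $|Y|$). $A(v)$, $\overline{A}(v)$ are the sets of arcs with origin, resp. terminus, $v$. A legal colouring is a map $c:AT\to X\cup Y$ restricting to a bijection $A(v)\to X$ for $v\in V_X$, to a bijection $A(v)\to Y$ for $v\in V_Y$, and constant on each $\overline{A}(v)$. $U_c(M,N)$ is the group of $g\in\mathrm{Aut}(T)$ with $gV_X=V_X$ and $c|_{A(gv)}\circ g|_{A(v)}\circ(c|_{A(v)})^{-1}$ in $M$ for $v\in V_X$ and in $N$ for $v\in V_Y$. The box product $M\boxtimes N\le\mathrm{Sym}(V_Y)$ is the group induced on $V_Y$ by $U_c(M,N)$. *)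

theory Defs
  imports Main "HOL-Algebra.Bij" "HOL-Library.Equipollence"
begin

definition simple_graph :: "'v set \<Rightarrow> ('v \<Rightarrow> 'v \<Rightarrow> bool) \<Rightarrow> bool" where
  "simple_graph V E \<longleftrightarrow> (\<forall>u w. E u w \<longrightarrow> u \<in> V \<and> w \<in> V \<and> E w u \<and> u \<noteq> w)"

definition nb_path :: "('v \<Rightarrow> 'v \<Rightarrow> bool) \<Rightarrow> 'v list \<Rightarrow> bool" where
  "nb_path E xs \<longleftrightarrow> xs \<noteq> [] \<and>
     (\<forall>i. Suc i < length xs \<longrightarrow> E (xs ! i) (xs ! Suc i)) \<and>
     (\<forall>i. Suc (Suc i) < length xs \<longrightarrow> xs ! i \<noteq> xs ! Suc (Suc i))"

text \<open>A tree: a nonempty simple graph in which any two vertices are joined by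
  exactly one non-backtracking walk (i.e. connected and without cycles).\<close>
definition is_tree :: "'v set \<Rightarrow> ('v \<Rightarrow> 'v \<Rightarrow> bool) \<Rightarrow> bool" where
  "is_tree V E \<longleftrightarrow> V \<noteq> {} \<and> simple_graph V E \<and>
     (\<forall>u\<in>V. \<forall>w\<in>V. \<exists>!xs. nb_path E xs \<and> hd xs = u \<and> last xs = w)"

definition arcs_out :: "('v \<Rightarrow> 'v \<Rightarrow> bool) \<Rightarrow> 'v \<Rightarrow> ('v \<times> 'v) set" where
  "arcs_out E v = {(v, w) | w. E v w}"

definition arcs_in :: "('v \<Rightarrow> 'v \<Rightarrow> bool) \<Rightarrow> 'v \<Rightarrow> ('v \<times> 'v) set" where
  "arcs_in E v = {(u, v) | u. E u v}"

definition biregular_tree ::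
  "'v set \<Rightarrow> ('v \<Rightarrow> 'v \<Rightarrow> bool) \<Rightarrow> 'v set \<Rightarrow> 'v set \<Rightarrow> 'a set \<Rightarrow> 'a set \<Rightarrow> bool" where
  "biregular_tree V E VX VY X Y \<longleftrightarrow> is_tree V E \<and> VX \<union> VY = V \<and> VX \<inter> VY = {} \<and>
     (\<forall>u w. E u w \<longrightarrow> (u \<in> VX \<longleftrightarrow> w \<in> VY)) \<and>
     (\<forall>v\<in>VX. arcs_out E v \<approx> X) \<and> (\<forall>v\<in>VY. arcs_out E v \<approx> Y)"

definition legal_colouring ::
  "('v \<Rightarrow> 'v \<Rightarrow> bool) \<Rightarrow> 'v set \<Rightarrow> 'v set \<Rightarrow> 'a set \<Rightarrow> 'a set \<Rightarrow> ('v \<times> 'v \<Rightarrow> 'a) \<Rightarrow> bool" where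
  "legal_colouring E VX VY X Y c \<longleftrightarrow>
     (\<forall>v\<in>VX. bij_betw c (arcs_out E v) X) \<and>
     (\<forall>v\<in>VY. bij_betw c (arcs_out E v) Y) \<and>
     (\<forall>v\<in>VX \<union> VY. \<forall>a\<in>arcs_in E v. \<forall>b\<in>arcs_in E v. c a = c b)"

definition tree_aut :: "'v set \<Rightarrow> ('v \<Rightarrow> 'v \<Rightarrow> bool) \<Rightarrow> ('v \<Rightarrow> 'v) set" where
  "tree_aut V E = {g. bij_betw g V V \<and> (\<forall>u\<in>V. \<forall>w\<in>V. E u w \<longleftrightarrow> E (g u) (g w))}"

text \<open>The local action  c|A(gv) \<circ> g|A(v) \<circ> (c|A(v))^{-1}  as a permutation of S
  (extensional outside S, i.e. an element of BijGroup S when it is a bijection).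
  Here g acts on arcs by g(v,w) = (g v, g w).\<close>
definition local_action ::
  "('v \<Rightarrow> 'v \<Rightarrow> bool) \<Rightarrow> ('v \<times> 'v \<Rightarrow> 'a) \<Rightarrow> ('v \<Rightarrow> 'v) \<Rightarrow> 'v \<Rightarrow> 'a set \<Rightarrow> ('a \<Rightarrow> 'a)" where
  "local_action E c g v S =
     (\<lambda>x\<in>S. c (g v, g (snd (the_inv_into (arcs_out E v) c x))))"

definition U_c ::
  "'v set \<Rightarrow> ('v \<Rightarrow> 'v \<Rightarrow> bool) \<Rightarrow> 'v set \<Rightarrow> 'v set \<Rightarrow> 'a set \<Rightarrow> 'a set \<Rightarrow>
   ('v \<times> 'v \<Rightarrow> 'a) \<Rightarrow> ('a \<Rightarrow> 'a) set \<Rightarrow> ('a \<Rightarrow> 'a) set \<Rightarrow> ('v \<Rightarrow> 'v) set" where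
  "U_c V E VX VY X Y c M N =
     {g \<in> tree_aut V E. g ` VX = VX \<and>
        (\<forall>v\<in>VX. local_action E c g v X \<in> M) \<and>
        (\<forall>v\<in>VY. local_action E c g v Y \<in> N)}"

definition box_product ::
  "'v set \<Rightarrow> ('v \<Rightarrow> 'v \<Rightarrow> bool) \<Rightarrow> 'v set \<Rightarrow> 'v set \<Rightarrow> 'a set \<Rightarrow> 'a set \<Rightarrow>
   ('v \<times> 'v \<Rightarrow> 'a) \<Rightarrow> ('a \<Rightarrow> 'a) set \<Rightarrow> ('a \<Rightarrow> 'a) set \<Rightarrow> ('v \<Rightarrow> 'v) set" where
  "box_product V E VX VY X Y c M N = (\<lambda>g. restrict g VY) ` U_c V E VX VY X Y c M N"

text \<open>Discreteness in the permutation topology of Sym(\<Omega>): the pointwise stabiliser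
  of some finite subset of \<Omega> is trivial.\<close>
definition discrete_perm_group :: "('b \<Rightarrow> 'b) set \<Rightarrow> 'b set \<Rightarrow> bool" where
  "discrete_perm_group G \<Omega> \<longleftrightarrow>
     (\<exists>F. finite F \<and> F \<subseteq> \<Omega> \<and>
        (\<forall>h\<in>G. (\<forall>y\<in>F. h y = y) \<longrightarrow> (\<forall>y\<in>\<Omega>. h y = y)))"

definition semiregular :: "('b \<Rightarrow> 'b) set \<Rightarrow> 'b set \<Rightarrow> bool" where
  "semiregular G \<Omega> \<longleftrightarrow>
     (\<forall>x\<in>\<Omega>. \<forall>h\<in>G. h x = x \<longrightarrow> h = \<one>\<^bsub>BijGroup \<Omega>\<^esub>)"

end

theory Submission imports Defs begin

text \<open>If \<open>M\<close> and \<open>N\<close> are semi-regular, an element of \<open>U\<^sub>c(M,N)\<close> fixing a vertex and one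
  of its neighbours has a local action there that fixes a colour, hence is trivial, so it fixes
  all neighbours as well; walking along paths it fixes the whole tree. Two \<open>V\<^sub>Y\<close>-vertices
  with a common neighbour determine that neighbour, so their pointwise stabiliser in
  \<open>M \<boxtimes> N\<close> is trivial.

  Conversely, suppose some \<open>m \<in> M\<close> (or \<open>N\<close>) fixes the colour \<open>x\<^sub>0\<close> but moves
  \<open>x\<^sub>1\<close>. Given a finite set \<open>F\<close>, root the tree, choose a vertex \<open>v\<close> further from the root
  than \<open>F\<close> whose parent arc has colour \<open>x\<^sub>0\<close>, and let \<open>g\<close> act on the subtree below \<open>v\<close> by
  applying \<open>m\<close> to the colour word leading to each vertex, trivially elsewhere. Its local actions
  are \<open>m\<close> or the identity, it fixes \<open>F\<close> and moves a vertex of \<open>V\<^sub>Y\<close>: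
  no finite set has trivial stabiliser.\<close>

lemma length_ge_2_split: assumes "2 \<le> length xs" shows "\<exists>ys a b. xs = ys @ [a, b]"
proof -
  have ne: "xs \<noteq> []" using assms by auto
  have bne: "butlast xs \<noteq> []" using assms by (cases xs) auto
  have "xs = butlast xs @ [last xs]" using ne by simp
  also have "butlast xs = butlast (butlast xs) @ [last (butlast xs)]" using bne by simp
  finally show ?thesis by (metis append.assoc append_Cons append_Nil)
qed

lemma nth_append_last_Cons:
  assumes "B \<noteq> []" shows "(B @ W) ! (length B - 1 + i) = (last B # W) ! i"
proof -
  have "B @ W = butlast B @ (last B # W)" using assms by simp
  then show ?thesis by (metis length_butlast nth_append_length_plus)
qed

lemma nb_path_nonempty: "nb_path E xs \<Longrightarrow> xs \<noteq> []"
  by (simp add: nb_path_def)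

lemma nb_path_prefix: assumes h: "nb_path E (xs @ ys)" "xs \<noteq> []" shows "nb_path E xs"
  unfolding nb_path_def
proof (intro conjI allI impI)
  show "xs \<noteq> []" by fact
next
  fix i assume i: "Suc i < length xs"
  then have "E ((xs@ys)!i) ((xs@ys)!Suc i)" using h unfolding nb_path_def by auto
  then show "E (xs!i) (xs!Suc i)" using i by (simp add: nth_append)
next
  fix i assume i: "Suc (Suc i) < length xs"
  then have "(xs@ys)!i \<noteq> (xs@ys)!Suc (Suc i)" using h unfolding nb_path_def by auto
  then show "xs!i \<noteq> xs!Suc (Suc i)" using i by (simp add: nth_append)
qed

lemma nb_path_snoc:
  assumes "nb_path E xs" "E (last xs) y" "2 \<le> length xs \<Longrightarrow> xs ! (length xs - 2) \<noteq> y"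
  shows "nb_path E (xs @ [y])"
proof -
  have ne: "xs \<noteq> []" using assms(1) by (simp add: nb_path_def)
  have l: "last xs = xs ! (length xs - 1)" using ne by (simp add: last_conv_nth)
  show ?thesis
    unfolding nb_path_def
  proof (intro conjI allI impI)
    show "xs @ [y] \<noteq> []" by simp
  next
    fix i assume i: "Suc i < length (xs @ [y])"
    show "E ((xs @ [y]) ! i) ((xs @ [y]) ! Suc i)"
    proof (cases "Suc i < length xs")
      case True then show ?thesis using assms(1) by (simp add: nb_path_def nth_append)
    next
      case False then have "i = length xs - 1" using i by simp
      then show ?thesis using assms(2) l ne by (simp add: nth_append)
    qed
  next
    fix i assume i: "Suc (Suc i) < length (xs @ [y])"
    show "(xs @ [y]) ! i \<noteq> (xs @ [y]) ! Suc (Suc i)"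
    proof (cases "Suc (Suc i) < length xs")
      case True then show ?thesis using assms(1) by (simp add: nb_path_def nth_append)
    next
      case False then have "i = length xs - 2" using i by simp
      then show ?thesis using assms(3) False i by (simp add: nth_append)
    qed
  qed
qed

definition extend_id :: "('b \<Rightarrow> 'b) \<Rightarrow> 'b set \<Rightarrow> 'b \<Rightarrow> 'b" where
  "extend_id m A x = (if x \<in> A then m x else x)"

lemma extend_id_inv_into:
  assumes "bij_betw m A A"
  shows "extend_id (inv_into A m) A (extend_id m A x) = x"
    and "extend_id m A (extend_id (inv_into A m) A x) = x"
  using assms bij_betw_inv_into[OF assms]
  by (auto simp: extend_id_def bij_betw_def bij_betw_apply inv_into_f_f f_inv_into_f)

lemma extend_id_image:
  assumes "bij_betw m A A" "B = A \<or> B \<inter> A = {}"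
  shows "extend_id m A ` B \<subseteq> B"
  using assms by (auto simp: extend_id_def bij_betw_apply)

locale coloured_tree =
  fixes V :: "'v set" and E :: "'v \<Rightarrow> 'v \<Rightarrow> bool" and VX VY :: "'v set"
    and X Y :: "'a set" and c :: "'v \<times> 'v \<Rightarrow> 'a"
  assumes tree: "is_tree V E" and cover: "VX \<union> VY = V" and disj: "VX \<inter> VY = {}"
    and bipartite: "\<And>u w. E u w \<Longrightarrow> (u \<in> VX \<longleftrightarrow> w \<in> VY)"
    and legal: "legal_colouring E VX VY X Y c"
    and XY: "X \<inter> Y = {}"
    and X2: "\<exists>a b. a \<in> X \<and> b \<in> X \<and> a \<noteq> b"
    and Y2: "\<exists>a b. a \<in> Y \<and> b \<in> Y \<and> a \<noteq> b"
begin

lemma adjacentD: "E u w \<Longrightarrow> u \<in> V \<and> w \<in> V \<and> E w u \<and> u \<noteq> w"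
  using tree unfolding is_tree_def simple_graph_def by blast

definition colours :: "'v \<Rightarrow> 'a set" where "colours a = (if a \<in> VX then X else Y)"
\<comment> \<open>A legal colouring is constant on the arcs into \<open>z\<close>, so any of them gives their colour.\<close>
definition in_colour :: "'v \<Rightarrow> 'a" where "in_colour z = c (SOME u. E u z, z)"

lemma colour_arc_eq: assumes "E u z" shows "c (u, z) = in_colour z"
proof -
  have z: "z \<in> VX \<union> VY" using adjacentD[OF assms] cover by auto
  have e: "E (SOME u. E u z) z" using assms by (rule someI)
  have "(u,z) \<in> arcs_in E z" "((SOME u. E u z), z) \<in> arcs_in E z"
    using assms e unfolding arcs_in_def by auto
  moreover have "\<forall>v\<in>VX \<union> VY. \<forall>a\<in>arcs_in E v. \<forall>b\<in>arcs_in E v. c a = c b"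
    using legal unfolding legal_colouring_def by blast
  ultimately show ?thesis unfolding in_colour_def using z by blast
qed

lemma bij_colour_out: assumes "u \<in> V" shows "bij_betw c (arcs_out E u) (colours u)"
proof (cases "u \<in> VX")
  case True then show ?thesis using legal unfolding legal_colouring_def colours_def by simp
next
  case False then have "u \<in> VY" using assms cover by blast
  then show ?thesis using legal False unfolding legal_colouring_def colours_def by simp
qed

lemma in_colour_mem: assumes "E u z" shows "in_colour z \<in> colours u"
proof -
  have "(u,z) \<in> arcs_out E u" using assms by (simp add: arcs_out_def)
  moreover have "u \<in> V" using adjacentD[OF assms] by simp
  ultimately have "c (u,z) \<in> colours u" using bij_betw_apply bij_colour_out by metis
  then show ?thesis using colour_arc_eq[OF assms] by simp
qed

lemma in_colour_inj: assumes "E u z" "E u z'" "in_colour z = in_colour z'" shows "z = z'"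
proof -
  have "(u,z) \<in> arcs_out E u" "(u,z') \<in> arcs_out E u" using assms by (simp_all add: arcs_out_def)
  moreover have "u \<in> V" using adjacentD[OF assms(1)] by simp
  then have "inj_on c (arcs_out E u)" using bij_colour_out bij_betw_imp_inj_on by metis
  moreover have "c (u,z) = c (u,z')" using assms colour_arc_eq[OF assms(1)] colour_arc_eq[OF assms(2)] by simp
  ultimately have "(u,z) = (u,z')" using inj_on_eq_iff by metis
  then show ?thesis by simp
qed

lemma nbr_exists: assumes "u \<in> V" "x \<in> colours u" shows "\<exists>z. E u z \<and> in_colour z = x"
proof -
  have "x \<in> c ` arcs_out E u" using bij_colour_out[OF assms(1)] assms(2) bij_betw_imp_surj_on by blast
  then obtain z where "E u z" "c (u,z) = x" unfolding arcs_out_def by auto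
  then show ?thesis using colour_arc_eq by auto
qed

definition nbr :: "'v \<Rightarrow> 'a \<Rightarrow> 'v" where "nbr u x = (THE z. E u z \<and> in_colour z = x)"

lemma nbr_spec: assumes "u \<in> V" "x \<in> colours u" shows "E u (nbr u x)" "in_colour (nbr u x) = x"
proof -
  have "\<exists>!z. E u z \<and> in_colour z = x" using nbr_exists[OF assms] in_colour_inj by blast
  then have "E u (nbr u x) \<and> in_colour (nbr u x) = x" unfolding nbr_def by (rule theI')
  then show "E u (nbr u x)" "in_colour (nbr u x) = x" by auto
qed

lemma nbr_in_colour: assumes "E u z" shows "nbr u (in_colour z) = z"
  unfolding nbr_def
proof (rule the_equality)
  show "E u z \<and> in_colour z = in_colour z" using assms by simp
  fix y assume "E u y \<and> in_colour y = in_colour z"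
  then show "y = z" using in_colour_inj assms by blast
qed

lemma colours_cases: "colours u = X \<or> colours u = Y" by (simp add: colours_def)

lemma X_neq_Y: "X \<noteq> Y" using X2 XY by auto

lemma adj_side: assumes "E u z" shows "z \<in> VX \<longleftrightarrow> u \<notin> VX"
  using bipartite[OF assms] adjacentD[OF assms] cover disj by blast

lemma colours_nonempty: "u \<in> V \<Longrightarrow> \<exists>x. x \<in> colours u"
  using X2 Y2 unfolding colours_def by auto

lemma in_colour_side:
  assumes "z \<in> V" shows "(z \<in> VX \<longleftrightarrow> in_colour z \<in> Y)" "(z \<in> VY \<longleftrightarrow> in_colour z \<in> X)"
proof -
  obtain x where x: "x \<in> colours z" using colours_nonempty assms by blast
  let ?w = "nbr z x"
  have e: "E z ?w" using nbr_spec[OF assms x] by simp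
  then have e': "E ?w z" using adjacentD[OF e] by simp
  have l: "in_colour z \<in> colours ?w" using in_colour_mem[OF e'] .
  have "z \<in> VX \<longleftrightarrow> ?w \<notin> VX" using adj_side[OF e] by blast
  moreover have "z \<in> VY \<longleftrightarrow> z \<notin> VX" using assms cover disj by blast
  ultimately show "(z \<in> VX \<longleftrightarrow> in_colour z \<in> Y)" "(z \<in> VY \<longleftrightarrow> in_colour z \<in> X)"
    using l XY unfolding colours_def by (auto split: if_splits)
qed

lemma in_colour_XY: "z \<in> V \<Longrightarrow> in_colour z \<in> X \<union> Y"
  using in_colour_side cover by blast

lemma in_colour_not_colours: "z \<in> V \<Longrightarrow> in_colour z \<notin> colours z"
  using in_colour_side XY cover unfolding colours_def by auto

lemma nb_path_in_V: assumes "nb_path E xs" "hd xs \<in> V" shows "set xs \<subseteq> V"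
proof
  fix y assume "y \<in> set xs"
  then obtain i where i: "i < length xs" "y = xs ! i" by (auto simp: in_set_conv_nth)
  show "y \<in> V"
  proof (cases i)
    case 0
    have "xs \<noteq> []" using i by auto
    then have "hd xs = xs ! 0" by (simp add: hd_conv_nth)
    then show ?thesis using i 0 assms(2) by simp
  next
    case (Suc j)
    have e: "E (xs!j) (xs!Suc j)" using i assms(1) Suc unfolding nb_path_def by auto
    show ?thesis using adjacentD[OF e] Suc i by simp
  qed
qed

fun colour_walk :: "'v \<Rightarrow> 'a list \<Rightarrow> 'v list" where
  "colour_walk a [] = []"
| "colour_walk a (x # xs) = nbr a x # colour_walk (nbr a x) xs"

fun adj_chain :: "'v \<Rightarrow> 'v list \<Rightarrow> bool" where
  "adj_chain a [] = True"
| "adj_chain a (y # ys) = (E a y \<and> adj_chain y ys)"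

lemma adj_chain_nth: "adj_chain a ys \<longleftrightarrow> (\<forall>i < length ys. E ((a # ys) ! i) (ys ! i))"
proof (induction ys arbitrary: a)
  case Nil then show ?case by simp
next
  case (Cons y ys)
  have "(\<forall>i < length (y # ys). E ((a # y # ys) ! i) ((y # ys) ! i)) \<longleftrightarrow>
        E a y \<and> (\<forall>i < length ys. E ((y # ys) ! i) (ys ! i))"
    by (simp only: length_Cons All_less_Suc2 nth_Cons_0 nth_Cons_Suc)
  then show ?case using Cons.IH by simp
qed

lemma adj_chain_nb_path: assumes "nb_path E (B @ a # ys)" shows "adj_chain a ys"
  unfolding adj_chain_nth
proof (intro allI impI)
  fix i assume i: "i < length ys"
  define Q where "Q = B @ a # ys"
  have "\<forall>k. Suc k < length Q \<longrightarrow> E (Q ! k) (Q ! Suc k)" using assms unfolding nb_path_def Q_def by blast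
  moreover have "Suc (length B + i) < length Q" using i by (simp add: Q_def)
  ultimately have "E (Q ! (length B + i)) (Q ! Suc (length B + i))" by blast
  moreover have "Q ! (length B + i) = (a # ys) ! i" unfolding Q_def by (simp only: nth_append_length_plus)
  moreover have "Q ! Suc (length B + i) = ys ! i"
    using nth_append_length_plus[of B "a # ys" "Suc i"] by (simp add: Q_def)
  ultimately show "E ((a # ys) ! i) (ys ! i)" by simp
qed

lemma colour_walk_length: "length (colour_walk a xs) = length xs"
  by (induction xs arbitrary: a) auto

lemma colour_walk_append: "colour_walk a (xs @ ys) = colour_walk a xs @ colour_walk (last (a # colour_walk a xs)) ys"
  by (induction xs arbitrary: a) auto

lemma colour_walk_in_colour: "adj_chain a ys \<Longrightarrow> colour_walk a (map in_colour ys) = ys"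
proof (induction ys arbitrary: a)
  case Nil then show ?case by simp
next
  case (Cons y ys)
  then have "E a y" "adj_chain y ys" by auto
  then show ?case using Cons.IH nbr_in_colour[of a y] by simp
qed

lemma colour_walk_map:
  assumes "adj_chain a' ys" "a \<in> V" "a' \<in> V" "a \<in> VX \<longleftrightarrow> a' \<in> VX" "f ` X \<subseteq> X" "f ` Y \<subseteq> Y"
  shows "adj_chain a (colour_walk a (map (f \<circ> in_colour) ys)) \<and> length (colour_walk a (map (f \<circ> in_colour) ys)) = length ys
    \<and> (\<forall>i<length ys. in_colour (colour_walk a (map (f \<circ> in_colour) ys) ! i) = f (in_colour (ys ! i)))
    \<and> set (colour_walk a (map (f \<circ> in_colour) ys)) \<subseteq> V"
  using assms(1-4)
proof (induction ys arbitrary: a a')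
  case Nil then show ?case by simp
next
  case (Cons y ys)
  have e: "E a' y" and ch: "adj_chain y ys" using Cons.prems by auto
  have "colours a' = colours a" using Cons.prems unfolding colours_def by simp
  then have ly: "in_colour y \<in> colours a" using in_colour_mem[OF e] by simp
  have fy: "f (in_colour y) \<in> colours a" using ly assms(5,6) colours_cases[of a] by (metis image_subset_iff)
  define z where "z = nbr a (f (in_colour y))"
  have ez: "E a z" and lz: "in_colour z = f (in_colour y)" using nbr_spec[OF Cons.prems(2) fy] z_def by auto
  have zV: "z \<in> V" "y \<in> V" using adjacentD[OF ez] adjacentD[OF e] by auto
  have side: "z \<in> VX \<longleftrightarrow> y \<in> VX" using adj_side[OF ez] adj_side[OF e] Cons.prems(4) by blast
  define W where "W = colour_walk z (map (f \<circ> in_colour) ys)"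
  have IH: "adj_chain z W" "length W = length ys" "\<forall>i<length ys. in_colour (W ! i) = f (in_colour (ys ! i))" "set W \<subseteq> V"
    using Cons.IH[OF ch zV side] unfolding W_def comp_def by simp_all
  have w: "colour_walk a (map (f \<circ> in_colour) (y # ys)) = z # W" by (simp add: z_def W_def)
  have "\<forall>i<length (y#ys). in_colour ((z # W) ! i) = f (in_colour ((y # ys) ! i))"
  proof (intro allI impI)
    fix i assume "i < length (y # ys)"
    then show "in_colour ((z # W) ! i) = f (in_colour ((y # ys) ! i))"
      using IH(3) lz by (cases i) auto
  qed
  then show ?case unfolding w using IH ez zV by simp
qed

lemma nb_path_colours_differ:
  assumes nb: "nb_path E xs" and i: "Suc (Suc i) < length xs"
  shows "in_colour (xs ! i) \<noteq> in_colour (xs ! Suc (Suc i))"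
proof -
  \<comment> \<open>The two vertices share the neighbour \<open>xs ! Suc i\<close>, which tells them apart by colour.\<close>
  have "E (xs ! i) (xs ! Suc i)" "E (xs ! Suc i) (xs ! Suc (Suc i))" "xs ! i \<noteq> xs ! Suc (Suc i)"
    using nb i unfolding nb_path_def by auto
  then show ?thesis using in_colour_inj adjacentD by blast
qed

lemma nb_path_relabel:
  assumes nb: "nb_path E (B @ ys)" and inV: "set (B @ ys) \<subseteq> V"
    and len: "2 \<le> length B" "length W = length ys"
    and chain: "adj_chain (last B) W" and f: "inj_on f (X \<union> Y)"
    and colours_W: "\<And>j. length B - 2 \<le> j \<Longrightarrow> j < length (B @ ys) \<Longrightarrow>
      in_colour ((B @ W) ! j) = f (in_colour ((B @ ys) ! j))"
  shows "nb_path E (B @ W)"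
proof -
  let ?Q = "B @ ys" and ?Q' = "B @ W"
  have lenQ: "length ?Q' = length ?Q" using len by simp
  have same: "?Q' ! j = ?Q ! j" if "j < length B" for j
    using that by (simp add: nth_append)
  have adj_Q: "E (?Q ! i) (?Q ! Suc i)" if "Suc i < length ?Q" for i
    using nb that unfolding nb_path_def by blast
  have adj_W: "E (?Q' ! j) (?Q' ! Suc j)" if j: "length B - 1 \<le> j" "Suc j < length ?Q'" for j
  proof -
    define i where "i = j - (length B - 1)"
    have "j = length B - 1 + i" "Suc j = length B - 1 + Suc i" using j unfolding i_def by auto
    moreover have "B \<noteq> []" using len by auto
    ultimately have "?Q' ! j = (last B # W) ! i" "?Q' ! Suc j = W ! i"
      using nth_append_last_Cons[of B W i] nth_append_last_Cons[of B W "Suc i"] by simp_all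
    moreover have "i < length W" using j len unfolding i_def by simp
    ultimately show ?thesis using chain unfolding adj_chain_nth by simp
  qed
  show ?thesis
    unfolding nb_path_def
  proof (intro conjI allI impI)
    show "?Q' \<noteq> []" using len by auto
  next
    fix i assume i: "Suc i < length ?Q'"
    show "E (?Q' ! i) (?Q' ! Suc i)"
      using same adj_Q[of i] adj_W[of i] i lenQ by (cases "Suc i < length B") auto
  next
    fix i assume i: "Suc (Suc i) < length ?Q'"
    show "?Q' ! i \<noteq> ?Q' ! Suc (Suc i)"
    proof (cases "Suc (Suc i) < length B")
      case True then show ?thesis using same nb i unfolding nb_path_def by auto
    next
      case False
      have "?Q ! n \<in> V" if "n < length ?Q" for n
        using nth_mem[OF that] inV by blast
      then have "?Q ! i \<in> V" "?Q ! Suc (Suc i) \<in> V" using i lenQ by auto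
      then have "f (in_colour (?Q ! i)) \<noteq> f (in_colour (?Q ! Suc (Suc i)))"
        using f nb_path_colours_differ[OF nb, of i] i lenQ in_colour_XY by (auto dest: inj_onD)
      moreover have "length B - 2 \<le> i" using False by simp
      ultimately show ?thesis using colours_W[of i] colours_W[of "Suc (Suc i)"] i lenQ by auto
    qed
  qed
qed

lemma local_action_in_colour:
  assumes "E w z" shows "local_action E c g w (colours w) (in_colour z) = c (g w, g z)"
proof -
  have wV: "w \<in> V" using adjacentD[OF assms] by simp
  have "(w, z) \<in> arcs_out E w" "c (w, z) = in_colour z"
    using assms colour_arc_eq[OF assms] by (simp_all add: arcs_out_def)
  then have "the_inv_into (arcs_out E w) c (in_colour z) = (w, z)"
    using the_inv_into_f_eq bij_betw_imp_inj_on[OF bij_colour_out[OF wV]] by metis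
  then show ?thesis unfolding local_action_def using in_colour_mem[OF assms] by simp
qed

lemma common_nbr_unique: assumes "E a w" "E w b" "E a w'" "E w' b" "a \<noteq> b" shows "w = w'"
proof -
  have nb: "nb_path E [a,w,b]" "nb_path E [a,w',b]"
    using assms unfolding nb_path_def by (auto simp: nth_Cons split: nat.split)
  have "a \<in> V" "b \<in> V" using adjacentD[OF assms(1)] adjacentD[OF assms(2)] by auto
  then have "\<exists>!xs. nb_path E xs \<and> hd xs = a \<and> last xs = b"
    using tree unfolding is_tree_def by blast
  then have "[a,w,b] = [a,w',b]" using nb by (metis last_ConsL last_ConsR list.discI list.sel(1))
  then show ?thesis by simp
qed

end

locale rooted_coloured_tree = coloured_tree +
  fixes r
  assumes r: "r \<in> V"
begin

definition root_path where "root_path u = (THE xs. nb_path E xs \<and> hd xs = r \<and> last xs = u)"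

lemma ex1_root_path: "u \<in> V \<Longrightarrow> \<exists>!xs. nb_path E xs \<and> hd xs = r \<and> last xs = u"
  using tree r unfolding is_tree_def by blast

lemma root_path_spec: assumes "u \<in> V" shows "nb_path E (root_path u)" "hd (root_path u) = r" "last (root_path u) = u"
proof -
  have "nb_path E (root_path u) \<and> hd (root_path u) = r \<and> last (root_path u) = u"
    unfolding root_path_def by (rule theI'[OF ex1_root_path[OF assms]])
  then show "nb_path E (root_path u)" "hd (root_path u) = r" "last (root_path u) = u" by auto
qed

lemma root_path_unique: assumes "nb_path E xs" "hd xs = r" "last xs \<in> V" shows "root_path (last xs) = xs"
  using ex1_root_path[OF assms(3)] root_path_spec[OF assms(3)] assms(1,2) by blast

lemma root_path_nonempty: "u \<in> V \<Longrightarrow> root_path u \<noteq> []"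
  using root_path_spec(1) nb_path_nonempty by blast

lemma root_path_in_V: "u \<in> V \<Longrightarrow> set (root_path u) \<subseteq> V"
  using nb_path_in_V root_path_spec r by metis

lemma root_path_prefix: assumes "u \<in> V" "root_path u = xs @ ys" "xs \<noteq> []" shows "root_path (last xs) = xs"
proof -
  have nb: "nb_path E xs" using nb_path_prefix root_path_spec(1)[OF assms(1)] assms(2,3) by metis
  have "hd xs = r" using root_path_spec(2)[OF assms(1)] assms(2,3) by simp
  moreover have "last xs \<in> V" using root_path_in_V[OF assms(1)] assms(2,3) by auto
  ultimately show ?thesis using root_path_unique nb by blast
qed

lemma root_path_snoc_adj: assumes "a \<in> V" "b \<in> V" "root_path b = root_path a @ [b]" shows "E a b"
proof -
  have "root_path a = butlast (root_path a) @ [a]"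
    using root_path_spec(3)[OF assms(1)] root_path_nonempty[OF assms(1)] by (metis append_butlast_last_id)
  then have "root_path b = butlast (root_path a) @ a # [b]" using assms(3) by (metis append_eq_Cons_conv append_assoc)
  then have "adj_chain a [b]" using adj_chain_nb_path root_path_spec(1)[OF assms(2)] by metis
  then show ?thesis by simp
qed

lemma root_path_adj: assumes "E a b" shows "root_path b = root_path a @ [b] \<or> root_path a = root_path b @ [a]"
proof -
  have aV: "a \<in> V" and bV: "b \<in> V" using adjacentD[OF assms] by auto
  define xs where "xs = root_path a"
  define n where "n = length xs"
  show ?thesis
  proof (cases "2 \<le> n \<and> xs ! (n - 2) = b")
    case True
    have ne: "xs \<noteq> []" using True unfolding n_def by auto
    have bne: "butlast xs \<noteq> []" using True unfolding n_def by (cases xs) auto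
    have la: "last xs = a" using root_path_spec(3)[OF aV] xs_def by simp
    have xs_eq: "xs = butlast xs @ [a]" using ne la by (metis append_butlast_last_id)
    have "last (butlast xs) = butlast xs ! (length (butlast xs) - 1)" using bne by (simp add: last_conv_nth)
    also have "\<dots> = xs ! (n - 2)" using True bne unfolding n_def by (subst nth_butlast) (auto simp: numeral_2_eq_2)
    finally have lb: "last (butlast xs) = b" using True by simp
    have "root_path (last (butlast xs)) = butlast xs" using root_path_prefix[OF aV _ bne] xs_eq xs_def by metis
    then have "root_path b = butlast xs" using lb by simp
    then show ?thesis using xs_eq xs_def by simp
  next
    case False
    have nb: "nb_path E (xs @ [b])"
    proof (rule nb_path_snoc)
      show "nb_path E xs" using root_path_spec(1)[OF aV] xs_def by simp
      show "E (last xs) b" using root_path_spec(3)[OF aV] xs_def assms by simp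
      show "2 \<le> length xs \<Longrightarrow> xs ! (length xs - 2) \<noteq> b" using False n_def by simp
    qed
    have "hd (xs @ [b]) = r" using root_path_spec(2)[OF aV] root_path_nonempty[OF aV] xs_def by simp
    then have "root_path (last (xs @ [b])) = xs @ [b]" using root_path_unique[OF nb] bV by simp
    then show ?thesis using xs_def by simp
  qed
qed

lemma root_path_nbr:
  assumes "u \<in> V" "x \<in> colours u"
    and "2 \<le> length (root_path u) \<Longrightarrow> in_colour (root_path u ! (length (root_path u) - 2)) \<noteq> x"
  shows "root_path (nbr u x) = root_path u @ [nbr u x]"
proof -
  define z where "z = nbr u x"
  have ez: "E u z" and lz: "in_colour z = x" using nbr_spec[OF assms(1,2)] z_def by auto
  have nb: "nb_path E (root_path u @ [z])"
  proof (rule nb_path_snoc)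
    show "nb_path E (root_path u)" using root_path_spec(1)[OF assms(1)] .
    show "E (last (root_path u)) z" using root_path_spec(3)[OF assms(1)] ez by simp
    show "2 \<le> length (root_path u) \<Longrightarrow> root_path u ! (length (root_path u) - 2) \<noteq> z" using assms(3) lz by blast
  qed
  have "hd (root_path u @ [z]) = r" using root_path_spec(2)[OF assms(1)] root_path_nonempty[OF assms(1)] by simp
  moreover have "z \<in> V" using adjacentD[OF ez] by simp
  ultimately have "root_path (last (root_path u @ [z])) = root_path u @ [z]" using root_path_unique[OF nb] by simp
  then show ?thesis using z_def by simp
qed

lemma colours_two: "\<exists>x1 x2. x1 \<in> colours u \<and> x2 \<in> colours u \<and> x1 \<noteq> x2"
  using X2 Y2 unfolding colours_def by auto

lemma exists_child: assumes "u \<in> V" shows "\<exists>z. E u z \<and> root_path z = root_path u @ [z]"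
proof -
  obtain x1 x2 where x: "x1 \<in> colours u" "x2 \<in> colours u" "x1 \<noteq> x2" using colours_two by blast
  define x where "x = (if 2 \<le> length (root_path u) \<and> in_colour (root_path u ! (length (root_path u) - 2)) = x1 then x2 else x1)"
  have xS: "x \<in> colours u" using x x_def by simp
  have "root_path (nbr u x) = root_path u @ [nbr u x]"
    by (rule root_path_nbr[OF assms xS]) (use x in \<open>auto simp: x_def\<close>)
  moreover have "E u (nbr u x)" using nbr_spec[OF assms xS] by simp
  ultimately show ?thesis by blast
qed

lemma exists_deep: "\<exists>u\<in>V. n \<le> length (root_path u)"
proof (induction n)
  case 0 then show ?case using r by blast
next
  case (Suc n)
  then obtain u where u: "u \<in> V" "n \<le> length (root_path u)" by blast
  obtain z where z: "E u z" "root_path z = root_path u @ [z]" using exists_child[OF u(1)] by blast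
  have "z \<in> V" using adjacentD[OF z(1)] by simp
  then show ?case using z u by (intro bexI[of _ z]) auto
qed

lemma exists_deep_with_parent_colour:
  assumes "w0 \<in> V" "x0 \<in> colours w0"
  shows "\<exists>ys0 p v. v \<in> V \<and> root_path v = ys0 @ [p, v] \<and> in_colour p = x0 \<and>
    n \<le> length (root_path v) \<and> (v \<in> VX \<longleftrightarrow> w0 \<in> VX)"
proof -
  obtain u where u: "u \<in> V" "n + 2 \<le> length (root_path u)" using exists_deep by blast
  obtain q where q: "q \<in> V" "n + 2 \<le> length (root_path q)" "q \<in> VX \<longleftrightarrow> w0 \<in> VX"
  proof (cases "u \<in> VX \<longleftrightarrow> w0 \<in> VX")
    case True then show ?thesis using that u by blast
  next
    case False
    obtain z where z: "E u z" "root_path z = root_path u @ [z]" using exists_child[OF u(1)] by blast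
    have "z \<in> V" using adjacentD[OF z(1)] by simp
    moreover have "n + 2 \<le> length (root_path z)" using z u by simp
    moreover have "z \<in> VX \<longleftrightarrow> w0 \<in> VX" using adj_side[OF z(1)] False by blast
    ultimately show ?thesis using that by blast
  qed
  have Sq: "x0 \<in> colours q" using assms q(3) unfolding colours_def by simp
  obtain zs q' b where dec: "root_path q = zs @ [q', b]" using length_ge_2_split[of "root_path q"] q(2) by auto
  have "b = q" using root_path_spec(3)[OF q(1)] dec by simp
  then have dec: "root_path q = zs @ [q', q]" using dec by simp
  show ?thesis
  proof (cases "in_colour q' = x0")
    case True then show ?thesis using q dec by (intro exI[of _ zs] exI[of _ q'] exI[of _ q]) auto
  next
    case False
    define p where "p = nbr q x0"
    have Pp: "root_path p = root_path q @ [p]"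
      unfolding p_def by (rule root_path_nbr[OF q(1) Sq]) (use dec False in \<open>simp add: nth_append\<close>)
    have ep: "E q p" and lp: "in_colour p = x0" using nbr_spec[OF q(1) Sq] p_def by auto
    have pV: "p \<in> V" using adjacentD[OF ep] by simp
    obtain v where v: "E p v" "root_path v = root_path p @ [v]" using exists_child[OF pV] by blast
    have vV: "v \<in> V" using adjacentD[OF v(1)] by simp
    have "root_path v = (zs @ [q', q]) @ [p, v]" using v(2) Pp dec by simp
    moreover have "n \<le> length (root_path v)" using v(2) Pp q(2) by simp
    moreover have "v \<in> VX \<longleftrightarrow> w0 \<in> VX" using adj_side[OF v(1)] adj_side[OF ep] q(3) by blast
    ultimately show ?thesis using vV lp by blast
  qed
qed

text \<open>\<open>twist v f\<close> sends the end of the walk from \<open>v\<close> along colours \<open>w\<close> to the end of the walk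
  along \<open>map f w\<close>, and fixes every vertex that is not a proper descendant of \<open>v\<close>.\<close>

definition descendant where
  "descendant v u \<longleftrightarrow> u \<in> V \<and> (\<exists>ys. ys \<noteq> [] \<and> root_path u = root_path v @ ys)"
definition branch where "branch v u = drop (length (root_path v)) (root_path u)"
definition twist where
  "twist v f u = (if descendant v u then last (colour_walk v (map (f \<circ> in_colour) (branch v u))) else u)"

lemma descendant_branch: assumes "descendant v u" shows "root_path u = root_path v @ branch v u" "branch v u \<noteq> []"
  using assms unfolding descendant_def branch_def by auto

lemma descendant_length: "descendant v u \<Longrightarrow> length (root_path v) < length (root_path u)"
  unfolding descendant_def by auto

lemma descendant_child_iff: assumes "a \<in> V" "b \<in> V" "v \<in> V" "root_path b = root_path a @ [b]"
  shows "descendant v b \<longleftrightarrow> descendant v a \<or> a = v"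
proof
  assume "descendant v b"
  then obtain zs where zs: "zs \<noteq> []" "root_path b = root_path v @ zs" unfolding descendant_def by blast
  have "root_path a @ [b] = (root_path v @ butlast zs) @ [last zs]" using zs assms(4) by simp
  then have Pa: "root_path a = root_path v @ butlast zs" by simp
  show "descendant v a \<or> a = v"
  proof (cases "butlast zs = []")
    case True
    then have "root_path a = root_path v" using Pa by simp
    then have "a = v" using root_path_spec(3)[OF assms(1)] root_path_spec(3)[OF assms(3)] by metis
    then show ?thesis by simp
  next
    case False then show ?thesis using Pa assms(1) unfolding descendant_def by blast
  qed
next
  assume "descendant v a \<or> a = v"
  then show "descendant v b"
  proof
    assume "descendant v a"
    then obtain ys where "ys \<noteq> []" "root_path a = root_path v @ ys" unfolding descendant_def by blast
    then show ?thesis using assms(2,4) unfolding descendant_def by (intro conjI exI[of _ "ys @ [b]"]) auto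
  next
    assume "a = v"
    then show ?thesis using assms(2,4) unfolding descendant_def by auto
  qed
qed

lemma branch_child: assumes "a \<in> V" "b \<in> V" "v \<in> V" "root_path b = root_path a @ [b]" "descendant v b"
  shows "branch v b = (if a = v then [b] else branch v a @ [b])"
proof (cases "a = v")
  case True then show ?thesis using assms unfolding branch_def by simp
next
  case False
  then have "descendant v a" using descendant_child_iff[OF assms(1-4)] assms(5) by simp
  then have "root_path a = root_path v @ branch v a" by (rule descendant_branch)
  then have eq: "root_path b = root_path v @ (branch v a @ [b])" using assms(4) by simp
  have "branch v b = drop (length (root_path v)) (root_path b)" by (simp add: branch_def)
  also have "\<dots> = branch v a @ [b]" using eq by simp
  finally show ?thesis using False by simp
qed

end

text \<open>That \<open>f\<close> fixes the colours of the arcs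
  into \<open>p\<close> and \<open>v\<close> is what makes \<open>twist v f\<close> preserve the arcs at \<open>v\<close>.\<close>

locale subtree_twist = rooted_coloured_tree +
  fixes v ys0 p f f'
  assumes v: "v \<in> V" and Pv: "root_path v = ys0 @ [p, v]"
    and fX: "f ` X \<subseteq> X" and fY: "f ` Y \<subseteq> Y" and f'X: "f' ` X \<subseteq> X" and f'Y: "f' ` Y \<subseteq> Y"
    and ff': "\<And>x. x \<in> X \<union> Y \<Longrightarrow> f' (f x) = x" and f'f: "\<And>x. x \<in> X \<union> Y \<Longrightarrow> f (f' x) = x"
    and fp: "f (in_colour p) = in_colour p" and fv: "f (in_colour v) = in_colour v"
begin

abbreviation g where "g \<equiv> twist v f"

lemma p_in_V: "p \<in> V" using root_path_in_V[OF v] Pv by auto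

lemma root_path_p: "root_path p = ys0 @ [p]"
  using root_path_prefix[OF v, of "ys0 @ [p]" "[v]"] Pv by simp

lemma subtree_twist_inverse: "subtree_twist V E VX VY X Y c r v ys0 p f' f"
proof -
  have "in_colour p \<in> X \<union> Y" "in_colour v \<in> X \<union> Y" using in_colour_XY p_in_V v by auto
  then have "f' (in_colour p) = in_colour p" "f' (in_colour v) = in_colour v" using ff' fp fv by metis+
  then show ?thesis
    by unfold_locales (use tree cover disj bipartite legal XY X2 Y2 r v Pv fX fY f'X f'Y ff' f'f in auto)
qed

lemma not_descendant_self: "\<not> descendant v v" unfolding descendant_def by auto
lemma not_descendant_p: "\<not> descendant v p" using descendant_length[of v p] Pv root_path_p by auto

lemma twist_not_descendant: "\<not> descendant v u \<Longrightarrow> g u = u" unfolding twist_def by simp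

lemma f_inj_on: "inj_on f (X \<union> Y)" using ff' by (metis inj_on_inverseI)
lemma f_mem_Y_iff: "x \<in> X \<union> Y \<Longrightarrow> f x \<in> Y \<longleftrightarrow> x \<in> Y" using fX fY XY by auto
lemma f_colours: "x \<in> colours u \<Longrightarrow> f x \<in> colours u" using fX fY unfolding colours_def by (auto split: if_splits)

lemma branch_adj_chain: assumes "descendant v u" shows "adj_chain v (branch v u)" "set (branch v u) \<subseteq> V"
proof -
  have uV: "u \<in> V" using assms unfolding descendant_def by simp
  have "root_path u = (ys0 @ [p]) @ v # branch v u" using descendant_branch[OF assms] Pv by simp
  then show "adj_chain v (branch v u)" using adj_chain_nb_path root_path_spec(1)[OF uV] by metis
  show "set (branch v u) \<subseteq> V" using descendant_branch[OF assms] root_path_in_V[OF uV] by auto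
qed

lemma twist_descendant:
  assumes "descendant v u"
  shows "descendant v (g u) \<and> branch v (g u) = colour_walk v (map (f \<circ> in_colour) (branch v u))
    \<and> in_colour (g u) = f (in_colour u) \<and> g u \<in> V"
proof -
  have uV: "u \<in> V" using assms unfolding descendant_def by simp
  define ys where "ys = branch v u"
  define W where "W = colour_walk v (map (f \<circ> in_colour) ys)"
  have Pu: "root_path u = root_path v @ ys" "ys \<noteq> []"
    using descendant_branch[OF assms] unfolding ys_def by auto
  have W: "adj_chain v W" "length W = length ys"
    "\<forall>i<length ys. in_colour (W ! i) = f (in_colour (ys ! i))" "set W \<subseteq> V"
    using colour_walk_map[OF branch_adj_chain(1)[OF assms] v v _ fX fY] unfolding W_def ys_def by auto
  have colours_W: "in_colour ((root_path v @ W) ! j) = f (in_colour ((root_path v @ ys) ! j))"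
    if "length (root_path v) - 2 \<le> j" "j < length (root_path v @ ys)" for j
  proof (cases "j < length (root_path v)")
    case True
    then have "j = length ys0 \<or> j = Suc (length ys0)" using that Pv by auto
    then show ?thesis using True Pv fp fv by (auto simp: nth_append)
  next
    case False then show ?thesis using W(2,3) that by (auto simp: nth_append)
  qed
  have nbW: "nb_path E (root_path v @ W)"
    by (rule nb_path_relabel[OF _ _ _ W(2) _ f_inj_on colours_W])
      (use root_path_spec(1)[OF uV] root_path_in_V[OF uV] Pu Pv W(1) in auto)
  have W_ne: "W \<noteq> []" using W(2) Pu(2) by auto
  have gu: "g u = last W" using assms unfolding twist_def W_def ys_def by simp
  have "root_path (g u) = root_path v @ W"
    using root_path_unique[OF nbW] root_path_spec(2)[OF v] root_path_nonempty[OF v] W(4) W_ne gu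
    by (simp add: subset_iff)
  moreover have "in_colour (g u) = f (in_colour u)"
  proof -
    have "last ys = u" using root_path_spec(3)[OF uV] Pu by simp
    then show ?thesis using gu W(2,3) W_ne Pu(2) by (simp add: last_conv_nth)
  qed
  ultimately show ?thesis using gu W(4) W_ne unfolding descendant_def branch_def W_def ys_def by auto
qed

lemma twist_in_V: "u \<in> V \<Longrightarrow> g u \<in> V"
  using twist_descendant twist_not_descendant by (cases "descendant v u") auto

lemma twist_side: assumes "u \<in> V" shows "g u \<in> VX \<longleftrightarrow> u \<in> VX"
proof (cases "descendant v u")
  case True
  then have "in_colour (g u) = f (in_colour u)" "g u \<in> V" using twist_descendant by auto
  then show ?thesis using in_colour_side(1)[of "g u"] in_colour_side(1)[OF assms] f_mem_Y_iff[OF in_colour_XY[OF assms]] by simp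
next
  case False then show ?thesis using twist_not_descendant by simp
qed

lemma colours_twist: "u \<in> V \<Longrightarrow> colours (g u) = colours u" using twist_side unfolding colours_def by simp

lemma twist_adj_child: assumes "a \<in> V" "b \<in> V" "root_path b = root_path a @ [b]" shows "E (g a) (g b)"
proof -
  have eab: "E a b" using root_path_snoc_adj[OF assms] .
  have flS: "f (in_colour b) \<in> colours a" using f_colours[OF in_colour_mem[OF eab]] .
  consider "descendant v a" | "a = v" | "\<not> descendant v a" "a \<noteq> v" by blast
  then show ?thesis
  proof cases
    case 1
    have av: "a \<noteq> v" using 1 not_descendant_self by auto
    have bb: "descendant v b" using descendant_child_iff[OF assms(1,2) v assms(3)] 1 by simp
    have Db: "branch v b = branch v a @ [b]" using branch_child[OF assms(1,2) v assms(3) bb] av by simp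
    define Wa where "Wa = colour_walk v (map (f \<circ> in_colour) (branch v a))"
    have Wne: "Wa \<noteq> []" using descendant_branch(2)[OF 1] colour_walk_length unfolding Wa_def by (metis length_0_conv length_map)
    have ga: "g a = last Wa" using 1 unfolding twist_def Wa_def by simp
    have "g b = last (colour_walk v (map (f \<circ> in_colour) (branch v a @ [b])))" using bb unfolding twist_def Db by simp
    also have "\<dots> = nbr (g a) (f (in_colour b))"
      using Wne ga unfolding Wa_def by (simp add: colour_walk_append)
    finally have gb: "g b = nbr (g a) (f (in_colour b))" .
    have "f (in_colour b) \<in> colours (g a)" using flS colours_twist[OF assms(1)] by simp
    then show ?thesis using nbr_spec(1)[OF twist_in_V[OF assms(1)]] gb by simp
  next
    case 2
    have bb: "descendant v b" using descendant_child_iff[OF assms(1,2) v assms(3)] 2 by simp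
    have Db: "branch v b = [b]" using branch_child[OF assms(1,2) v assms(3) bb] 2 by simp
    have "g b = nbr v (f (in_colour b))" using bb unfolding twist_def Db by simp
    moreover have "g a = v" using 2 not_descendant_self twist_not_descendant by simp
    ultimately show ?thesis using nbr_spec(1)[OF v] flS 2 by simp
  next
    case 3
    have "\<not> descendant v b" using descendant_child_iff[OF assms(1,2) v assms(3)] 3 by simp
    then show ?thesis using 3 twist_not_descendant eab by simp
  qed
qed

lemma twist_adj: assumes "E a b" shows "E (g a) (g b)"
proof -
  have V: "a \<in> V" "b \<in> V" using adjacentD[OF assms] by auto
  from root_path_adj[OF assms] show ?thesis
  proof
    assume "root_path b = root_path a @ [b]" then show ?thesis using twist_adj_child V by simp
  next
    assume "root_path a = root_path b @ [a]" then have "E (g b) (g a)" using twist_adj_child V by simp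
    then show ?thesis using adjacentD by blast
  qed
qed

lemma twist_inverse: assumes "u \<in> V" shows "twist v f' (g u) = u"
proof (cases "descendant v u")
  case True
  define ys where "ys = branch v u"
  have ch: "adj_chain v ys" "set ys \<subseteq> V" using branch_adj_chain[OF True] ys_def by auto
  define W where "W = colour_walk v (map (f \<circ> in_colour) ys)"
  have wm: "length W = length ys" "\<forall>i<length ys. in_colour (W ! i) = f (in_colour (ys ! i))"
    using colour_walk_map[OF ch(1) v v _ fX fY] unfolding W_def by auto
  have gb: "descendant v (g u)" "branch v (g u) = W" using twist_descendant[OF True] unfolding W_def ys_def by auto
  have "map (f' \<circ> in_colour) W = map in_colour ys"
  proof (rule nth_equalityI)
    show "length (map (f' \<circ> in_colour) W) = length (map in_colour ys)" using wm by simp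
    fix i assume "i < length (map (f' \<circ> in_colour) W)"
    then have i: "i < length ys" using wm by simp
    have "ys ! i \<in> V" using ch(2) i by (auto intro: nth_mem)
    then show "map (f' \<circ> in_colour) W ! i = map in_colour ys ! i" using wm i ff' in_colour_XY by simp
  qed
  then have "twist v f' (g u) = last (colour_walk v (map in_colour ys))" using gb unfolding twist_def by simp
  also have "\<dots> = last ys" using colour_walk_in_colour[OF ch(1)] by simp
  also have "\<dots> = u" using descendant_branch[OF True] root_path_spec(3)[OF assms] unfolding ys_def by (metis last_appendR)
  finally show ?thesis .
next
  case False then show ?thesis using twist_not_descendant unfolding twist_def by simp
qed

lemma adj_subtree:
  assumes "descendant v w \<or> w = v" "E w z"
  shows "descendant v z \<or> z = v \<or> z = p"
proof -
  have wV: "w \<in> V" and zV: "z \<in> V" using adjacentD[OF assms(2)] by auto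
  from root_path_adj[OF assms(2)] show ?thesis
  proof
    assume "root_path z = root_path w @ [z]"
    then show ?thesis using descendant_child_iff[OF wV zV v] assms(1) by simp
  next
    assume h: "root_path w = root_path z @ [w]"
    show ?thesis
    proof (cases "w = v")
      case True
      then have "root_path z = ys0 @ [p]" using h Pv by simp
      then show ?thesis using root_path_spec(3)[OF zV] by simp
    next
      case False then show ?thesis using descendant_child_iff[OF zV wV v h] assms(1) by blast
    qed
  qed
qed

lemma adj_outside_subtree:
  assumes "\<not> (descendant v w \<or> w = v)" "E w z"
  shows "\<not> descendant v z"
proof -
  have wV: "w \<in> V" and zV: "z \<in> V" using adjacentD[OF assms(2)] by auto
  from root_path_adj[OF assms(2)] show ?thesis
    using descendant_child_iff[OF wV zV v] descendant_child_iff[OF zV wV v] assms(1) by auto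
qed

lemma local_action_twist:
  assumes w: "w \<in> V"
  shows "local_action E c g w (colours w) = (\<lambda>x\<in>colours w. if descendant v w \<or> w = v then f x else x)"
proof -
  have "local_action E c g w (colours w) x = (if descendant v w \<or> w = v then f x else x)"
    if x: "x \<in> colours w" for x
  proof -
    define z where "z = nbr w x"
    have ez: "E w z" and zx: "in_colour z = x" using nbr_spec[OF w x] z_def by auto
    have zV: "z \<in> V" using adjacentD[OF ez] by simp
    have "local_action E c g w (colours w) x = in_colour (g z)"
      using local_action_in_colour[OF ez] colour_arc_eq[OF twist_adj[OF ez]] zx by simp
    moreover have "in_colour (g z) = f (in_colour z)" if "descendant v w \<or> w = v"
      using adj_subtree[OF that ez] twist_descendant twist_not_descendant not_descendant_self
        not_descendant_p fv fp by auto
    moreover have "g z = z" if "\<not> (descendant v w \<or> w = v)"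
      using adj_outside_subtree[OF that ez] twist_not_descendant by simp
    ultimately show ?thesis using zx by auto
  qed
  then show ?thesis unfolding local_action_def by (intro restrict_ext) simp
qed

lemma twist_tree_aut: "g \<in> tree_aut V E"
proof -
  have inv: "subtree_twist V E VX VY X Y c r v ys0 p f' f" by (rule subtree_twist_inverse)
  have b: "bij_betw g V V"
  proof (rule bij_betw_byWitness[where f' = "twist v f'"])
    show "\<forall>a\<in>V. twist v f' (g a) = a" using twist_inverse by simp
    show "\<forall>a\<in>V. g (twist v f' a) = a" using subtree_twist.twist_inverse[OF inv] by simp
    show "g ` V \<subseteq> V" using twist_in_V by auto
    show "twist v f' ` V \<subseteq> V" using subtree_twist.twist_in_V[OF inv] by auto
  qed
  have "E a b \<longleftrightarrow> E (g a) (g b)" if "a \<in> V" "b \<in> V" for a b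
  proof
    assume "E a b" then show "E (g a) (g b)" by (rule twist_adj)
  next
    assume "E (g a) (g b)"
    then have "E (twist v f' (g a)) (twist v f' (g b))" by (rule subtree_twist.twist_adj[OF inv])
    then show "E a b" using twist_inverse that by simp
  qed
  then show ?thesis using b unfolding tree_aut_def by blast
qed

lemma twist_VX: "g ` VX = VX"
proof -
  have inv: "subtree_twist V E VX VY X Y c r v ys0 p f' f" by (rule subtree_twist_inverse)
  have "g ` VX \<subseteq> VX" using twist_side cover by auto
  moreover have "VX \<subseteq> g ` VX"
  proof
    fix x assume x: "x \<in> VX"
    then have xV: "x \<in> V" using cover by auto
    have "twist v f' x \<in> VX" using subtree_twist.twist_side[OF inv xV] x by simp
    moreover have "g (twist v f' x) = x" using subtree_twist.twist_inverse[OF inv xV] by simp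
    ultimately show "x \<in> g ` VX" by (metis image_eqI)
  qed
  ultimately show ?thesis by blast
qed

lemma twist_fixes_first_colour: assumes "descendant v u" "g u = u" shows "f (in_colour (branch v u ! 0)) = in_colour (branch v u ! 0)"
proof -
  define ys where "ys = branch v u"
  have ch: "adj_chain v ys" using branch_adj_chain[OF assms(1)] ys_def by auto
  have yne: "ys \<noteq> []" using descendant_branch[OF assms(1)] ys_def by simp
  define W where "W = colour_walk v (map (f \<circ> in_colour) ys)"
  have wm: "\<forall>i<length ys. in_colour (W ! i) = f (in_colour (ys ! i))"
    using colour_walk_map[OF ch v v _ fX fY] unfolding W_def by auto
  have "branch v (g u) = W" using twist_descendant[OF assms(1)] unfolding W_def ys_def by auto
  then have "W = ys" using assms(2) ys_def by simp
  then show ?thesis using wm yne ys_def by auto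
qed

lemma twist_moves_VY:
  assumes x1: "x1 \<in> colours v" "f x1 \<noteq> x1"
  shows "\<exists>y\<in>VY. g y \<noteq> y"
proof -
  define c1 where "c1 = nbr v x1"
  have ec1: "E v c1" and lc1: "in_colour c1 = x1" using nbr_spec[OF v x1(1)] c1_def by auto
  have c1V: "c1 \<in> V" using adjacentD[OF ec1] by simp
  have "in_colour p \<noteq> x1" using fp x1(2) by auto
  have Pc1: "root_path c1 = root_path v @ [c1]"
    unfolding c1_def
    by (rule root_path_nbr[OF v x1(1)]) (use Pv \<open>in_colour p \<noteq> x1\<close> in \<open>simp add: nth_append\<close>)
  have c1_desc: "descendant v c1" "branch v c1 = [c1]"
    using descendant_child_iff[OF v c1V v Pc1] branch_child[OF v c1V v Pc1] by auto
  have moved: "g u \<noteq> u" if "descendant v u" "branch v u ! 0 = c1" for u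
    using twist_fixes_first_colour[OF that(1)] that(2) lc1 x1(2) by auto
  show ?thesis
  proof (cases "c1 \<in> VY")
    case True then show ?thesis using moved[OF c1_desc(1)] c1_desc(2) by auto
  next
    case False
    obtain d where ed: "E c1 d" and Pd: "root_path d = root_path c1 @ [d]"
      using exists_child[OF c1V] by blast
    have dV: "d \<in> V" using adjacentD[OF ed] by simp
    have "c1 \<noteq> v" using adjacentD[OF ec1] by auto
    then have "descendant v d" "branch v d = [c1, d]"
      using descendant_child_iff[OF c1V dV v Pd] branch_child[OF c1V dV v Pd] c1_desc by auto
    moreover have "d \<in> VY" using adj_side[OF ed] False dV c1V cover by auto
    ultimately show ?thesis using moved[of d] by auto
  qed
qed
end

context rooted_coloured_tree
begin

lemma exists_subtree_twist:
  assumes w0: "w0 \<in> V" and m: "bij_betw m (colours w0) (colours w0)"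
    and x0: "x0 \<in> colours w0" "m x0 = x0"
  obtains v ys0 p where "subtree_twist V E VX VY X Y c r v ys0 p
      (extend_id m (colours w0)) (extend_id (inv_into (colours w0) m) (colours w0))"
    and "n \<le> length (root_path v)" and "colours v = colours w0"
proof -
  let ?A = "colours w0"
  obtain ys0 p v where v: "v \<in> V" "root_path v = ys0 @ [p, v]" "in_colour p = x0"
      "n \<le> length (root_path v)" "v \<in> VX \<longleftrightarrow> w0 \<in> VX"
    using exists_deep_with_parent_colour[OF w0 x0(1), of n] by blast
  have sv: "colours v = ?A" using v(5) unfolding colours_def by simp
  have sides: "X = ?A \<or> X \<inter> ?A = {}" "Y = ?A \<or> Y \<inter> ?A = {}"
    using colours_cases[of w0] XY by auto
  have "subtree_twist V E VX VY X Y c r v ys0 p (extend_id m ?A) (extend_id (inv_into ?A m) ?A)"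
  proof (intro subtree_twist.intro subtree_twist_axioms.intro rooted_coloured_tree_axioms)
    show "extend_id m ?A ` X \<subseteq> X" "extend_id m ?A ` Y \<subseteq> Y"
      "extend_id (inv_into ?A m) ?A ` X \<subseteq> X" "extend_id (inv_into ?A m) ?A ` Y \<subseteq> Y"
      using extend_id_image[OF m] extend_id_image[OF bij_betw_inv_into[OF m]] sides by auto
    show "extend_id m ?A (in_colour p) = in_colour p" using v(3) x0 by (simp add: extend_id_def)
    show "extend_id m ?A (in_colour v) = in_colour v"
      using in_colour_not_colours[OF v(1)] sv by (simp add: extend_id_def)
  qed (use v(1,2) extend_id_inv_into[OF m] in simp_all)
  then show ?thesis using that v(4) sv by blast
qed

lemma exists_local_twist:
  assumes w0: "w0 \<in> V" and m: "m \<in> Bij (colours w0)" and x0: "x0 \<in> colours w0" "m x0 = x0"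
    and x1: "x1 \<in> colours w0" "m x1 \<noteq> x1" and F: "finite F"
  shows "\<exists>g. g \<in> tree_aut V E \<and> g ` VX = VX \<and>
     (\<forall>w\<in>V. local_action E c g w (colours w) = (\<lambda>x\<in>colours w. x) \<or>
        (colours w = colours w0 \<and> local_action E c g w (colours w) = m)) \<and>
     (\<forall>y\<in>F. g y = y) \<and> (\<exists>y\<in>VY. g y \<noteq> y)"
proof -
  let ?A = "colours w0" and ?f = "extend_id m (colours w0)"
  have bm: "bij_betw m ?A ?A" and extm: "m \<in> extensional ?A" using m unfolding Bij_def by auto
  define n where "n = Suc (Max (length ` root_path ` F))"
  obtain v ys0 p where tw: "subtree_twist V E VX VY X Y c r v ys0 p ?f (extend_id (inv_into ?A m) ?A)"
    and deep: "n \<le> length (root_path v)" and sv: "colours v = ?A"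
    using exists_subtree_twist[OF w0 bm x0] by blast
  interpret subtree_twist V E VX VY X Y c r v ys0 p ?f "extend_id (inv_into ?A m) ?A" by (rule tw)
  have "local_action E c g w (colours w) = (\<lambda>x\<in>colours w. x) \<or>
      (colours w = ?A \<and> local_action E c g w (colours w) = m)" if w: "w \<in> V" for w
  proof (cases "colours w = ?A")
    case True
    have "restrict ?f ?A = m" using extm by (auto simp: extend_id_def extensional_def)
    then show ?thesis using local_action_twist[OF w] True by (cases "descendant v w \<or> w = v") auto
  next
    case False
    then have "colours w \<inter> ?A = {}" using colours_cases[of w] colours_cases[of w0] XY by auto
    then have "(\<lambda>x\<in>colours w. if descendant v w \<or> w = v then ?f x else x) = (\<lambda>x\<in>colours w. x)"
      by (intro restrict_ext) (auto simp: extend_id_def)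
    then show ?thesis using local_action_twist[OF w] by simp
  qed
  moreover have "g y = y" if "y \<in> F" for y
  proof -
    have "length (root_path y) \<le> Max (length ` root_path ` F)" using F that by (intro Max_ge) auto
    then show ?thesis using descendant_length[of v y] deep twist_not_descendant unfolding n_def by fastforce
  qed
  moreover have "\<exists>y\<in>VY. g y \<noteq> y" using twist_moves_VY[of x1] sv x1 by (simp add: extend_id_def)
  ultimately show ?thesis using twist_tree_aut twist_VX by blast
qed

end

context coloured_tree
begin

lemma tree_aut_adj: "g \<in> tree_aut V E \<Longrightarrow> E u w \<Longrightarrow> E (g u) (g w)"
  using adjacentD unfolding tree_aut_def by blast

lemma tree_aut_fixes_common_nbr:
  assumes g: "g \<in> tree_aut V E" and "E a w" "E w b" "a \<noteq> b" "g a = a" "g b = b"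
  shows "g w = w"
  using common_nbr_unique[OF assms(2,3) _ _ assms(4)] tree_aut_adj[OF g, of a w] tree_aut_adj[OF g, of w b]
    assms by metis

lemma VX_VY_nonempty: "VX \<noteq> {}" "VY \<noteq> {}"
proof -
  obtain t where t: "t \<in> V" using tree unfolding is_tree_def by blast
  obtain x where "x \<in> colours t" using colours_nonempty[OF t] by blast
  then have "E t (nbr t x)" using nbr_spec[OF t] by blast
  then have "{t, nbr t x} \<inter> VX \<noteq> {}" "{t, nbr t x} \<inter> VY \<noteq> {}"
    using bipartite adjacentD cover by blast+
  then show "VX \<noteq> {}" "VY \<noteq> {}" by auto
qed

definition local_group :: "('a \<Rightarrow> 'a) set \<Rightarrow> ('a \<Rightarrow> 'a) set \<Rightarrow> 'v \<Rightarrow> ('a \<Rightarrow> 'a) set" where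
  "local_group M N w = (if w \<in> VX then M else N)"

lemma mem_U_c_iff:
  "g \<in> U_c V E VX VY X Y c M N \<longleftrightarrow> g \<in> tree_aut V E \<and> g ` VX = VX \<and>
     (\<forall>w\<in>V. local_action E c g w (colours w) \<in> local_group M N w)"
  using cover disj unfolding U_c_def local_group_def colours_def by auto

lemma local_group_subset_Bij:
  "subgroup M (BijGroup X) \<Longrightarrow> subgroup N (BijGroup Y) \<Longrightarrow> local_group M N w \<subseteq> Bij (colours w)"
  using subgroup.subset unfolding local_group_def colours_def by (fastforce simp: BijGroup_def)

lemma id_in_local_group:
  "subgroup M (BijGroup X) \<Longrightarrow> subgroup N (BijGroup Y) \<Longrightarrow> (\<lambda>x\<in>colours w. x) \<in> local_group M N w"
  using subgroup.one_closed unfolding local_group_def colours_def by (fastforce simp: BijGroup_def)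

lemma semiregular_local_group:
  "semiregular M X \<Longrightarrow> semiregular N Y \<Longrightarrow> semiregular (local_group M N w) (colours w)"
  unfolding local_group_def colours_def by simp

lemma box_product_stabiliser_nontrivial:
  assumes sM: "subgroup M (BijGroup X)" and sN: "subgroup N (BijGroup Y)"
    and w0: "w0 \<in> V" and m: "m \<in> local_group M N w0"
    and x0: "x0 \<in> colours w0" "m x0 = x0" and x1: "x1 \<in> colours w0" "m x1 \<noteq> x1"
    and F: "finite F" "F \<subseteq> VY"
  shows "\<exists>h\<in>box_product V E VX VY X Y c M N. (\<forall>y\<in>F. h y = y) \<and> (\<exists>y\<in>VY. h y \<noteq> y)"
proof -
  interpret rooted_coloured_tree V E VX VY X Y c w0 by unfold_locales (rule w0)
  have "m \<in> Bij (colours w0)" using local_group_subset_Bij[OF sM sN] m by blast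
  then obtain g where g: "g \<in> tree_aut V E" "g ` VX = VX"
    "\<forall>w\<in>V. local_action E c g w (colours w) = (\<lambda>x\<in>colours w. x) \<or>
       (colours w = colours w0 \<and> local_action E c g w (colours w) = m)"
    "\<forall>y\<in>F. g y = y" "\<exists>y\<in>VY. g y \<noteq> y"
    using exists_local_twist[OF w0 _ x0 x1 F(1)] by blast
  have same_group: "local_group M N w = local_group M N w0" if "colours w = colours w0" for w
    using that X_neq_Y unfolding local_group_def colours_def by (auto split: if_splits)
  have "g \<in> U_c V E VX VY X Y c M N"
    unfolding mem_U_c_iff
  proof (intro conjI ballI)
    show "g \<in> tree_aut V E" "g ` VX = VX" by (fact g(1), fact g(2))
  next
    fix w assume "w \<in> V"
    then consider "local_action E c g w (colours w) = (\<lambda>x\<in>colours w. x)"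
      | "colours w = colours w0" "local_action E c g w (colours w) = m"
      using g(3) by blast
    then show "local_action E c g w (colours w) \<in> local_group M N w"
    proof cases
      case 1 then show ?thesis using id_in_local_group[OF sM sN] by simp
    next
      case 2 then show ?thesis using same_group[of w] m by simp
    qed
  qed
  then have "restrict g VY \<in> box_product V E VX VY X Y c M N" unfolding box_product_def by blast
  moreover have "\<forall>y\<in>F. restrict g VY y = y" "\<exists>y\<in>VY. restrict g VY y \<noteq> y"
    using g(4,5) F(2) by auto
  ultimately show ?thesis by blast
qed

lemma discrete_imp_semiregular:
  assumes sM: "subgroup M (BijGroup X)" and sN: "subgroup N (BijGroup Y)"
    and disc: "discrete_perm_group (box_product V E VX VY X Y c M N) VY"
  shows "semiregular M X \<and> semiregular N Y"
proof -
  obtain F where F: "finite F" "F \<subseteq> VY"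
    and stab: "\<forall>h\<in>box_product V E VX VY X Y c M N. (\<forall>y\<in>F. h y = y) \<longrightarrow> (\<forall>y\<in>VY. h y = y)"
    using disc unfolding discrete_perm_group_def by blast
  have "semiregular (local_group M N w) (colours w)" if w: "w \<in> V" for w
  proof (rule ccontr)
    assume "\<not> semiregular (local_group M N w) (colours w)"
    then obtain x0 m where x0: "x0 \<in> colours w" and m: "m \<in> local_group M N w" "m x0 = x0"
      and m_ne: "m \<noteq> (\<lambda>x\<in>colours w. x)"
      unfolding semiregular_def by (auto simp: BijGroup_def)
    have "m \<in> extensional (colours w)"
      using m(1) local_group_subset_Bij[OF sM sN] by (auto simp: Bij_def)
    then obtain x1 where x1: "x1 \<in> colours w" "m x1 \<noteq> x1"
      using m_ne by (metis (no_types, lifting) extensionalityI restrict_apply' restrict_extensional)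
    show False
      using box_product_stabiliser_nontrivial[OF sM sN w m(1) x0 m(2) x1 F] stab by blast
  qed
  moreover obtain wx wy where "wx \<in> VX" "wy \<in> VY" using VX_VY_nonempty by blast
  moreover have "wy \<notin> VX" using \<open>wy \<in> VY\<close> disj by blast
  ultimately show ?thesis using cover unfolding local_group_def colours_def by (metis UnCI)
qed

lemma semiregular_fixes_nbrs:
  assumes g: "g \<in> U_c V E VX VY X Y c M N" and sr: "semiregular M X" "semiregular N Y"
    and gw: "g w = w" and ez: "E w z" and gz: "g z = z" and ez': "E w z'"
  shows "g z' = z'"
proof -
  let ?la = "local_action E c g w (colours w)"
  have wV: "w \<in> V" using adjacentD[OF ez] by simp
  have aut: "g \<in> tree_aut V E" and "?la \<in> local_group M N w" using g wV unfolding mem_U_c_iff by auto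
  moreover have "?la (in_colour z) = in_colour z"
    using local_action_in_colour[OF ez] colour_arc_eq[OF ez] gw gz by simp
  ultimately have la_id: "?la = (\<lambda>x\<in>colours w. x)"
    using semiregular_local_group[OF sr, of w] in_colour_mem[OF ez]
    unfolding semiregular_def by (auto simp: BijGroup_def)
  have e2: "E w (g z')" using tree_aut_adj[OF aut ez'] gw by simp
  have "in_colour (g z') = ?la (in_colour z')"
    using local_action_in_colour[OF ez'] colour_arc_eq[OF e2] gw by simp
  then have "in_colour (g z') = in_colour z'" using la_id in_colour_mem[OF ez'] by simp
  then show ?thesis using in_colour_inj[OF e2 ez'] by simp
qed

lemma semiregular_fixes_all:
  assumes g: "g \<in> U_c V E VX VY X Y c M N" and sr: "semiregular M X" "semiregular N Y"
    and eaw: "E a w" and ga: "g a = a" and gw: "g w = w" and u: "u \<in> V"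
  shows "g u = u"
proof -
  obtain xs where xs: "nb_path E xs" "hd xs = a" "last xs = u"
    using tree adjacentD[OF eaw] u unfolding is_tree_def by blast
  have adj: "E (xs ! i) (xs ! Suc i)" if "Suc i < length xs" for i
    using xs(1) that unfolding nb_path_def by blast
  have ne: "xs \<noteq> []" using xs(1) by (rule nb_path_nonempty)
  then have x0: "xs ! 0 = a" using xs(2) by (simp add: hd_conv_nth)
  have fixed: "g (xs ! i) = xs ! i \<and> g (xs ! Suc i) = xs ! Suc i" if "Suc i < length xs" for i
    using that
  proof (induction i)
    case 0
    then show ?case using semiregular_fixes_nbrs[OF g sr ga eaw gw] adj[of 0] x0 ga by simp
  next
    case (Suc i)
    then have "g (xs ! i) = xs ! i" "g (xs ! Suc i) = xs ! Suc i" by simp_all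
    moreover have "E (xs ! Suc i) (xs ! i)" "E (xs ! Suc i) (xs ! Suc (Suc i))"
      using adj adjacentD Suc.prems by auto
    ultimately show ?case using semiregular_fixes_nbrs[OF g sr] by blast
  qed
  have u_nth: "u = xs ! (length xs - 1)" using xs(3) ne by (simp add: last_conv_nth)
  show ?thesis
  proof (cases "length xs = 1")
    case True then show ?thesis using u_nth x0 ga by simp
  next
    case False
    then have "Suc (length xs - 2) = length xs - 1" "length xs - 1 < length xs"
      using ne by (cases xs; simp)+
    then show ?thesis using fixed[of "length xs - 2"] u_nth by simp
  qed
qed

lemma semiregular_imp_discrete:
  assumes sr: "semiregular M X" "semiregular N Y"
  shows "discrete_perm_group (box_product V E VX VY X Y c M N) VY"
proof -
  obtain w where w: "w \<in> VX" using VX_VY_nonempty by blast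
  then have wV: "w \<in> V" and Sw: "colours w = X" using cover unfolding colours_def by auto
  obtain xa xb where x: "xa \<in> colours w" "xb \<in> colours w" "xa \<noteq> xb" using X2 Sw by blast
  define a b where "a = nbr w xa" and "b = nbr w xb"
  have ea: "E w a" and eb: "E w b" and ab: "a \<noteq> b"
    using nbr_spec[OF wV x(1)] nbr_spec[OF wV x(2)] x(3) unfolding a_def b_def by auto
  have "a \<in> V" "b \<in> V" "a \<notin> VX" "b \<notin> VX"
    using adjacentD[OF ea] adjacentD[OF eb] adj_side[OF ea] adj_side[OF eb] w by auto
  then have ab_VY: "{a, b} \<subseteq> VY" using cover by blast
  have stab: "\<forall>h\<in>box_product V E VX VY X Y c M N. (\<forall>y\<in>{a, b}. h y = y) \<longrightarrow> (\<forall>y\<in>VY. h y = y)"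
  proof (intro ballI impI)
    fix h y assume h: "h \<in> box_product V E VX VY X Y c M N" and hab: "\<forall>y\<in>{a, b}. h y = y"
      and y: "y \<in> VY"
    obtain g where g: "g \<in> U_c V E VX VY X Y c M N" and hg: "h = restrict g VY"
      using h unfolding box_product_def by blast
    have ga: "g a = a" and gb: "g b = b" using hab hg ab_VY by auto
    have eaw: "E a w" using adjacentD[OF ea] by simp
    have "g \<in> tree_aut V E" using g unfolding mem_U_c_iff by blast
    then have "g w = w" by (rule tree_aut_fixes_common_nbr[OF _ eaw eb ab ga gb])
    then have "g y = y" by (rule semiregular_fixes_all[OF g sr eaw ga]) (use y cover in blast)
    then show "h y = y" using hg y by simp
  qed
  show ?thesis
    unfolding discrete_perm_group_def by (intro exI[of _ "{a, b}"] conjI stab) (use ab_VY in auto)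
qed

end

theorem theorem6p4:
  fixes X Y :: "'a set" and M N :: "('a \<Rightarrow> 'a) set"
    and V VX VY :: "'v set" and E :: "'v \<Rightarrow> 'v \<Rightarrow> bool" and c :: "'v \<times> 'v \<Rightarrow> 'a"
  assumes "X \<inter> Y = {}"
    and "\<exists>a b. a \<in> X \<and> b \<in> X \<and> a \<noteq> b"
    and "\<exists>a b. a \<in> Y \<and> b \<in> Y \<and> a \<noteq> b"
    and "subgroup M (BijGroup X)" and "M \<noteq> {\<one>\<^bsub>BijGroup X\<^esub>}"
    and "subgroup N (BijGroup Y)" and "N \<noteq> {\<one>\<^bsub>BijGroup Y\<^esub>}"
    and "biregular_tree V E VX VY X Y"
    and "legal_colouring E VX VY X Y c"
  shows "discrete_perm_group (box_product V E VX VY X Y c M N) VY \<longleftrightarrow>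
         semiregular M X \<and> semiregular N Y"
proof -
  interpret coloured_tree V E VX VY X Y c
    using assms(1-3,8,9) unfolding biregular_tree_def by unfold_locales auto
  show ?thesis
    using discrete_imp_semiregular[OF assms(4,6)] semiregular_imp_discrete by blast
qed

end
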